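(* Let $\hat v\in\{0,1\}^{\mathcal T}$ be the indicator vector of a proper triple set. Then the optimal objective value of the linear program $\mathrm{LP}(\hat v)$: minimize $\sum_{J\in\mathcal N}\beta_J y_J$ over $y\in[0,1]^{\mathcal N}$ subject to, for every triple $t=(J,J',J'')\in\mathcal T$, $y_{J''}-y_J\le 1-\hat v_t$, $y_{J''}-y_{J'}\le 1-\hat v_t$, $y_J+y_{J'}-y_{J''}\le 2-\hat v_t$, lies in the interval $[-\eta,0]$, where $\eta=-\sum_{i=1}^m\min(0,\alpha_i)$.
   Context: A multilinear program has data $n,m$, coefficients $\alpha_i\in\mathbb{R}$ and nonempty index sets $J_i\subseteq[n]$ ($i\in[m]$). Let $\mathcal N=\bigcup_i\{J:\emptyset\ne J\subseteq J_i\}$, and for $J\in\mathcal N$ let $\beta_J=\sum_{i: J_i=J}\alpha_i$ (so $\sum_J\beta_Jy_J=\sum_i\alpha_iy_{J_i}$). A triple is $t=(J,J',J'')$ with $J''\in\mathcal N$, $|J''|\ge2$, $J,J'$ nonempty, disjoint, $J\cup J'=J''$, listed with $J,J'$ in lexicographic order ($\mathsf{tail1}(t)=J$, $\mathsf{tail2}(t)=J'$, $\mathsf{head}(t)=J''$); $\mathcal T$ is the set of all triples. A proper triple set is a set $T\subseteq\mathcal T$ containing a subset $T'$ such that (1) every $J_i$ with $|J_i|>1$ is the head of some triple in $T'$, and (2) whenever a set $J$ with $|J|>1$ is the first or second element of a triple in $T'$, $J$ is the head of a different triple in $T'$. Its indicator vector has $\hat v_t=1$ iff $t\in T$. *)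

theory Defs
  imports Main "HOL.Real"
begin

text \<open>Instance data: index sets J i for i < m (i.e. [m] = {0..<m}), subsets of [n] = {1..n},
  coefficients alpha i.\<close>

definition valid_instance :: "nat \<Rightarrow> nat \<Rightarrow> (nat \<Rightarrow> nat set) \<Rightarrow> bool" where
  "valid_instance n m J \<longleftrightarrow> (\<forall>i<m. J i \<noteq> {} \<and> J i \<subseteq> {1..n})"

definition NN :: "nat \<Rightarrow> (nat \<Rightarrow> nat set) \<Rightarrow> nat set set" where
  "NN m J = (\<Union>i<m. {K. K \<noteq> {} \<and> K \<subseteq> J i})"

definition beta :: "nat \<Rightarrow> (nat \<Rightarrow> real) \<Rightarrow> (nat \<Rightarrow> nat set) \<Rightarrow> nat set \<Rightarrow> real" where
  "beta m alpha J K = (\<Sum>i\<in>{i. i < m \<and> J i = K}. alpha i)"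

type_synonym triple = "nat set \<times> nat set \<times> nat set"

definition tail1 :: "triple \<Rightarrow> nat set" where "tail1 t = fst t"
definition tail2 :: "triple \<Rightarrow> nat set" where "tail2 t = fst (snd t)"
definition head :: "triple \<Rightarrow> nat set" where "head t = snd (snd t)"

definition set_lex_less :: "nat set \<Rightarrow> nat set \<Rightarrow> bool" where
  "set_lex_less A B \<longleftrightarrow>
     (sorted_list_of_set A, sorted_list_of_set B) \<in> lexord {(x, y). x < y}"

definition Triples :: "nat \<Rightarrow> (nat \<Rightarrow> nat set) \<Rightarrow> triple set" where
  "Triples m J = {(A, B, C). C \<in> NN m J \<and> 2 \<le> card C \<and> A \<noteq> {} \<and> B \<noteq> {}
      \<and> A \<inter> B = {} \<and> A \<union> B = C \<and> set_lex_less A B}"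

definition proper_triple_set :: "nat \<Rightarrow> (nat \<Rightarrow> nat set) \<Rightarrow> triple set \<Rightarrow> bool" where
  "proper_triple_set m J T \<longleftrightarrow> T \<subseteq> Triples m J \<and>
     (\<exists>T' \<subseteq> T.
        (\<forall>i<m. 1 < card (J i) \<longrightarrow> (\<exists>t\<in>T'. head t = J i)) \<and>
        (\<forall>t\<in>T'. \<forall>K\<in>{tail1 t, tail2 t}. 1 < card K \<longrightarrow>
            (\<exists>t'\<in>T'. t' \<noteq> t \<and> head t' = K)))"

definition indicator_vec :: "triple set \<Rightarrow> triple \<Rightarrow> real" where
  "indicator_vec T t = (if t \<in> T then 1 else 0)"

definition LP_feasible :: "nat \<Rightarrow> (nat \<Rightarrow> nat set) \<Rightarrow> (triple \<Rightarrow> real) \<Rightarrow> (nat set \<Rightarrow> real) \<Rightarrow> bool" where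
  "LP_feasible m J v y \<longleftrightarrow>
     (\<forall>K\<in>NN m J. 0 \<le> y K \<and> y K \<le> 1) \<and>
     (\<forall>t\<in>Triples m J.
        y (head t) - y (tail1 t) \<le> 1 - v t \<and>
        y (head t) - y (tail2 t) \<le> 1 - v t \<and>
        y (tail1 t) + y (tail2 t) - y (head t) \<le> 2 - v t)"

definition LP_objective :: "nat \<Rightarrow> (nat \<Rightarrow> real) \<Rightarrow> (nat \<Rightarrow> nat set) \<Rightarrow> (nat set \<Rightarrow> real) \<Rightarrow> real" where
  "LP_objective m alpha J y = (\<Sum>K\<in>NN m J. beta m alpha J K * y K)"

definition LP_optimal_value :: "nat \<Rightarrow> (nat \<Rightarrow> real) \<Rightarrow> (nat \<Rightarrow> nat set) \<Rightarrow> (triple \<Rightarrow> real) \<Rightarrow> real \<Rightarrow> bool" where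
  "LP_optimal_value m alpha J v r \<longleftrightarrow>
     (\<exists>y. LP_feasible m J v y \<and> LP_objective m alpha J y = r) \<and>
     (\<forall>y. LP_feasible m J v y \<longrightarrow> r \<le> LP_objective m alpha J y)"

definition eta :: "nat \<Rightarrow> (nat \<Rightarrow> real) \<Rightarrow> real" where
  "eta m alpha = - (\<Sum>i<m. min 0 (alpha i))"

end

theory Submission
  imports Defs "HOL-Analysis.Function_Topology"
begin

text \<open>The zero vector is feasible, so the optimum is at most 0; every feasible y lies in the
  unit box, so each term \<open>\<beta>\<^sub>K y\<^sub>K\<close> is at least \<open>min 0 \<beta>\<^sub>K\<close>, and these sum to at least
  \<open>-\<eta>\<close>. The optimum is attained because the feasible region is a nonempty compact subset of
  the finite-dimensional cube \<open>[0,1]\<^sup>\<N>\<close> and the objective is continuous.\<close>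

lemma closedin_common_sublevel_set:
  assumes "\<And>g. g \<in> G \<Longrightarrow> continuous_map X euclideanreal g"
  shows "closedin X {x \<in> topspace X. \<forall>g\<in>G. g x \<le> 0}"
proof -
  have "{x \<in> topspace X. \<forall>g\<in>G. g x \<le> 0}
      = \<Inter> (insert (topspace X) ((\<lambda>g. {x \<in> topspace X. g x \<in> {..0}}) ` G))"
    by auto
  also have "closedin X \<dots>"
    using assms closedin_continuous_map_preimage[of X euclideanreal _ "{..0}"]
    by (intro closedin_Inter) auto
  finally show ?thesis .
qed

lemma compactin_attains_min:
  assumes "compactin X S" "S \<noteq> {}" "continuous_map X euclideanreal f"
  obtains x where "x \<in> S" "\<And>y. y \<in> S \<Longrightarrow> f x \<le> f y"
proof -
  have "compact (f ` S)"
    using image_compactin[OF assms(1,3)] by simp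
  then obtain x where "x \<in> S" "\<forall>y\<in>S. f x \<le> f y"
    using compact_attains_inf[of "f ` S"] assms(2) by auto
  then show thesis using that by blast
qed

lemma finite_NN:
  assumes "valid_instance n m J"
  shows "finite (NN m J)"
proof (rule finite_subset)
  show "NN m J \<subseteq> Pow {1..n}"
    using assms unfolding NN_def valid_instance_def by auto
qed simp

lemma Triples_in_NN:
  assumes "t \<in> Triples m J"
  shows "head t \<in> NN m J" "tail1 t \<in> NN m J" "tail2 t \<in> NN m J"
  using assms unfolding Triples_def NN_def head_def tail1_def tail2_def by auto

lemma LP_feasible_restrict:
  "LP_feasible m J v (restrict y (NN m J)) \<longleftrightarrow> LP_feasible m J v y"
  using Triples_in_NN unfolding LP_feasible_def by auto

lemma LP_objective_restrict:
  "LP_objective m alpha J (restrict y (NN m J)) = LP_objective m alpha J y"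
  unfolding LP_objective_def by (rule sum.cong) auto

lemma LP_feasible_zero:
  assumes "\<And>t. v t \<le> 1"
  shows "LP_feasible m J v (\<lambda>_. 0)"
  using assms order_trans[OF assms] unfolding LP_feasible_def by force

lemma LP_objective_zero: "LP_objective m alpha J (\<lambda>_. 0) = 0"
  unfolding LP_objective_def by simp

lemma sum_min_alpha_le_beta_mult:
  assumes "0 \<le> x" "x \<le> 1"
  shows "(\<Sum>i | i < m \<and> J i = K. min 0 (alpha i)) \<le> beta m alpha J K * x"
proof -
  have "(\<Sum>i | i < m \<and> J i = K. min 0 (alpha i)) \<le> min 0 (beta m alpha J K)"
    unfolding beta_def min.bounded_iff by (intro conjI sum_nonpos sum_mono) auto
  also have "\<dots> \<le> beta m alpha J K * x"
    using assms mult_left_mono_neg[of x 1 "beta m alpha J K"] by (cases "beta m alpha J K \<ge> 0") auto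
  finally show ?thesis .
qed

lemma LP_objective_ge_neg_eta:
  assumes "valid_instance n m J" "LP_feasible m J v y"
  shows "- eta m alpha \<le> LP_objective m alpha J y"
proof -
  have J_in_NN: "J ` {..<m} \<subseteq> NN m J"
    using assms(1) unfolding valid_instance_def NN_def by auto
  have "- eta m alpha = (\<Sum>K\<in>NN m J. \<Sum>i | i < m \<and> J i = K. min 0 (alpha i))"
    unfolding eta_def
    using sum.group[OF finite_lessThan finite_NN[OF assms(1)] J_in_NN, of "\<lambda>i. min 0 (alpha i)"]
    by simp
  also have "\<dots> \<le> LP_objective m alpha J y"
    unfolding LP_objective_def
    using assms(2) by (intro sum_mono sum_min_alpha_le_beta_mult) (auto simp: LP_feasible_def)
  finally show ?thesis .
qed

definition LP_constraints ::
  "nat \<Rightarrow> (nat \<Rightarrow> nat set) \<Rightarrow> (triple \<Rightarrow> real) \<Rightarrow> ((nat set \<Rightarrow> real) \<Rightarrow> real) set" where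
  "LP_constraints m J v =
    (\<Union>K\<in>NN m J. {\<lambda>y. y K - 1, \<lambda>y. - y K}) \<union>
    (\<Union>t\<in>Triples m J. {\<lambda>y. y (head t) - y (tail1 t) - (1 - v t),
                        \<lambda>y. y (head t) - y (tail2 t) - (1 - v t),
                        \<lambda>y. y (tail1 t) + y (tail2 t) - y (head t) - (2 - v t)})"

lemma LP_feasible_iff_constraints:
  "LP_feasible m J v y \<longleftrightarrow> (\<forall>g\<in>LP_constraints m J v. g y \<le> 0)"
  unfolding LP_constraints_def LP_feasible_def by (auto simp: ball_Un)

lemma continuous_map_LP_constraints:
  assumes "g \<in> LP_constraints m J v"
  shows "continuous_map (product_topology (\<lambda>_. euclideanreal) (NN m J)) euclideanreal g"
  using assms unfolding LP_constraints_def
  by (auto intro!: continuous_intros simp: Triples_in_NN)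

lemma continuous_map_LP_objective:
  assumes "finite (NN m J)"
  shows "continuous_map (product_topology (\<lambda>_. euclideanreal) (NN m J)) euclideanreal
     (LP_objective m alpha J)"
  using assms unfolding LP_objective_def by (auto intro!: continuous_intros)

lemma LP_optimal_value_exists:
  assumes "valid_instance n m J" "LP_feasible m J v y"
  shows "\<exists>r. LP_optimal_value m alpha J v r"
proof -
  define X where "X = product_topology (\<lambda>_::nat set. euclideanreal) (NN m J)"
  define F where "F = {y \<in> topspace X. LP_feasible m J v y}"
  have "closedin X F"
    unfolding F_def X_def LP_feasible_iff_constraints
    by (intro closedin_common_sublevel_set continuous_map_LP_constraints)
  moreover have "F \<subseteq> (\<Pi>\<^sub>E K\<in>NN m J. {0..1})"
    unfolding F_def X_def LP_feasible_def by auto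
  moreover have "compactin X (\<Pi>\<^sub>E K\<in>NN m J. {0..1})"
    unfolding X_def by (simp add: compactin_PiE)
  ultimately have "compactin X F"
    using closed_compactin by blast
  moreover have "restrict y (NN m J) \<in> F"
    using assms(2) unfolding F_def X_def by (simp add: LP_feasible_restrict)
  ultimately obtain y0 where y0: "y0 \<in> F"
    and min: "\<And>z. z \<in> F \<Longrightarrow> LP_objective m alpha J y0 \<le> LP_objective m alpha J z"
    using compactin_attains_min[OF _ _ continuous_map_LP_objective[OF finite_NN[OF assms(1)], of alpha, folded X_def]]
    by blast
  have "LP_objective m alpha J y0 \<le> LP_objective m alpha J z" if "LP_feasible m J v z" for z
    using min[of "restrict z (NN m J)"] that
    unfolding F_def X_def by (simp add: LP_feasible_restrict LP_objective_restrict)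
  with y0 show ?thesis
    unfolding LP_optimal_value_def F_def by blast
qed

theorem lemma1:
  fixes n m :: nat and alpha :: "nat \<Rightarrow> real" and J :: "nat \<Rightarrow> nat set" and T :: "triple set"
  assumes "valid_instance n m J"
    and "proper_triple_set m J T"
  shows "\<exists>r. LP_optimal_value m alpha J (indicator_vec T) r \<and> - eta m alpha \<le> r \<and> r \<le> 0"
proof -
  have zero_feasible: "LP_feasible m J (indicator_vec T) (\<lambda>_. 0)"
    by (rule LP_feasible_zero) (simp add: indicator_vec_def)
  obtain r where r: "LP_optimal_value m alpha J (indicator_vec T) r"
    using LP_optimal_value_exists[OF assms(1) zero_feasible] by blast
  then obtain y where "LP_feasible m J (indicator_vec T) y" "LP_objective m alpha J y = r"
    unfolding LP_optimal_value_def by blast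
  then have "- eta m alpha \<le> r"
    using LP_objective_ge_neg_eta[OF assms(1)] by metis
  moreover have "r \<le> 0"
    using r zero_feasible LP_objective_zero unfolding LP_optimal_value_def by metis
  ultimately show ?thesis
    using r by blast
qed

end
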